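(* For every finite simple graph $G$, $\operatorname{box}(G) \le \operatorname{tw}(G) + 2$.
   Context: An axis-parallel $b$-dimensional box is a Cartesian product $R_1\times\cdots\times R_b$ of closed real intervals $R_i=[a_i,b_i]$. The boxicity $\operatorname{box}(G)$ of a graph $G$ is the minimum $b$ such that $G$ is the intersection graph of a family of axis-parallel $b$-dimensional boxes (one box per vertex, two distinct vertices adjacent iff their boxes intersect). A tree decomposition of $G=(V,E)$ is a pair $(\{X_i : i\in I\},T)$ with $T$ a tree on node set $I$ and $X_i\subseteq V$, such that $\bigcup_i X_i=V$, every edge has both endpoints in some $X_i$, and whenever $j$ lies on the path in $T$ from $i$ to $k$ we have $X_i\cap X_k\subseteq X_j$. Its width is $\max_i |X_i|-1$, and the treewidth $\operatorname{tw}(G)$ is the minimum width of a tree decomposition of $G$. *)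

theory Defs
  imports Main "HOL-Library.Extended_Real" Complex_Main
begin

definition simple_graph :: "'a set \<Rightarrow> ('a \<Rightarrow> 'a \<Rightarrow> bool) \<Rightarrow> bool" where
  "simple_graph V E \<longleftrightarrow> finite V \<and> (\<forall>u v. E u v \<longrightarrow> u \<in> V \<and> v \<in> V \<and> u \<noteq> v \<and> E v u)"

(* Box representation in dimension b: vertex v gets the box
   [lo v 0, hi v 0] x ... x [lo v (b-1), hi v (b-1)].
   Two closed boxes intersect iff in every coordinate the intervals intersect. *)
definition box_rep :: "'a set \<Rightarrow> ('a \<Rightarrow> 'a \<Rightarrow> bool) \<Rightarrow> nat \<Rightarrow> bool" where
  "box_rep V E b \<longleftrightarrow> (\<exists>lo hi :: 'a \<Rightarrow> nat \<Rightarrow> real.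
      (\<forall>v\<in>V. \<forall>i<b. lo v i \<le> hi v i) \<and>
      (\<forall>u\<in>V. \<forall>v\<in>V. u \<noteq> v \<longrightarrow>
          (E u v \<longleftrightarrow> (\<forall>i<b. max (lo u i) (lo v i) \<le> min (hi u i) (hi v i)))))"

definition boxicity :: "'a set \<Rightarrow> ('a \<Rightarrow> 'a \<Rightarrow> bool) \<Rightarrow> nat" where
  "boxicity V E = (LEAST b. box_rep V E b)"

definition simple_path :: "'i set \<Rightarrow> ('i \<Rightarrow> 'i \<Rightarrow> bool) \<Rightarrow> 'i list \<Rightarrow> 'i \<Rightarrow> 'i \<Rightarrow> bool" where
  "simple_path I T p x y \<longleftrightarrow> p \<noteq> [] \<and> hd p = x \<and> last p = y \<and> distinct p \<and>
      set p \<subseteq> I \<and> (\<forall>k. Suc k < length p \<longrightarrow> T (p ! k) (p ! Suc k))"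

definition is_tree :: "'i set \<Rightarrow> ('i \<Rightarrow> 'i \<Rightarrow> bool) \<Rightarrow> bool" where
  "is_tree I T \<longleftrightarrow> finite I \<and> I \<noteq> {} \<and>
      (\<forall>u v. T u v \<longrightarrow> u \<in> I \<and> v \<in> I \<and> u \<noteq> v \<and> T v u) \<and>
      (\<forall>x\<in>I. \<forall>y\<in>I. \<exists>!p. simple_path I T p x y)"

definition tree_decomp :: "'a set \<Rightarrow> ('a \<Rightarrow> 'a \<Rightarrow> bool) \<Rightarrow> 'i set \<Rightarrow> ('i \<Rightarrow> 'i \<Rightarrow> bool) \<Rightarrow> ('i \<Rightarrow> 'a set) \<Rightarrow> bool" where
  "tree_decomp V E I T X \<longleftrightarrow> is_tree I T \<and>
      (\<forall>i\<in>I. X i \<subseteq> V) \<and> (\<Union>i\<in>I. X i) = V \<and>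
      (\<forall>u v. E u v \<longrightarrow> (\<exists>i\<in>I. u \<in> X i \<and> v \<in> X i)) \<and>
      (\<forall>i\<in>I. \<forall>k\<in>I. \<forall>p. simple_path I T p i k \<longrightarrow> (\<forall>j\<in>set p. X i \<inter> X k \<subseteq> X j))"

definition decomp_width :: "'i set \<Rightarrow> ('i \<Rightarrow> 'a set) \<Rightarrow> int" where
  "decomp_width I X = int (Max ((\<lambda>i. card (X i)) ` I)) - 1"

(* Treewidth: minimal width over tree decompositions; trees are indexed by nat
   (w.l.o.g., as every finite tree is isomorphic to one on a subset of nat). *)
definition treewidth :: "'a set \<Rightarrow> ('a \<Rightarrow> 'a \<Rightarrow> bool) \<Rightarrow> int" where
  "treewidth V E = (LEAST w. \<exists>(I::nat set) T X. tree_decomp V E I T X \<and> decomp_width I X = w)"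

end

theory Submission
  imports Defs "HOL-Library.Sublist" "HOL-Library.List_Lexorder"
begin

(* Root a tree decomposition whose bags have at most k vertices. The bags containing a vertex v
   form a subtree; let top(v) be its root, the highest bag containing v. Colouring the vertices
   greedily in order of increasing depth of top(v) yields k colours, distinct on every bag.
   One dimension records the ancestor relation of the tops: v gets the interval of depth-first
   preorder numbers of the subtree below top(v), and two such intervals meet iff the tops are
   comparable. Each colour j contributes one more dimension: a vertex of colour j is the point
   depth(top v), every other vertex v the ray starting at the least depth of top(w) over the
   neighbours w of colour j in the bag top(v). Adjacent vertices meet in every dimension, and for
   nonadjacent u, v with top(u) above top(v) the dimension of the colour of u separates them.
   This gives k + 1 = tw + 2 dimensions. *)

section \<open>Lexicographic ranks of lists\<close>

lemma prefix_imp_less_eq_list: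
  fixes xs ys :: "'a::linorder list"
  assumes "prefix xs ys"
  shows "xs \<le> ys"
proof -
  obtain zs where "ys = xs @ zs" using assms prefixE by blast
  then show ?thesis
    by (cases zs) (auto simp: list_le_def list_less_def lexord_append_rightI)
qed

lemma parallel_extensions_less:
  fixes xs ys :: "'a::linorder list"
  assumes "xs \<parallel> ys"
  shows "(\<forall>zs ws. xs @ zs < ys @ ws) \<or> (\<forall>zs ws. ys @ zs < xs @ ws)"
proof -
  obtain as b bs c cs where "b \<noteq> c" "xs = as @ b # bs" "ys = as @ c # cs"
    using parallel_decomp[OF assms] by blast
  then show ?thesis
    by (cases "b < c") (auto simp: list_less_def lexord_append_left_rightI)
qed

(* Numbering the root paths of a tree lexicographically is a depth-first preorder, so the
   extensions of a path occupy an interval of ranks. *)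
definition lex_rank :: "'a::linorder list set \<Rightarrow> 'a list \<Rightarrow> nat" where
  "lex_rank L xs = card {ys \<in> L. ys < xs}"

definition max_ext_rank :: "'a::linorder list set \<Rightarrow> 'a list \<Rightarrow> nat" where
  "max_ext_rank L xs = Max (lex_rank L ` {ys \<in> L. prefix xs ys})"

lemma lex_rank_mono:
  "finite L \<Longrightarrow> xs \<le> ys \<Longrightarrow> lex_rank L xs \<le> lex_rank L ys"
  unfolding lex_rank_def by (intro card_mono) auto

lemma lex_rank_strict_mono:
  "finite L \<Longrightarrow> xs \<in> L \<Longrightarrow> xs < ys \<Longrightarrow> lex_rank L xs < lex_rank L ys"
  unfolding lex_rank_def by (intro psubset_card_mono) auto

lemma lex_rank_le_max_ext_rank:
  "finite L \<Longrightarrow> ys \<in> L \<Longrightarrow> prefix xs ys \<Longrightarrow> lex_rank L ys \<le> max_ext_rank L xs"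
  unfolding max_ext_rank_def by (intro Max_ge) auto

lemma max_ext_rank_attained:
  assumes "finite L" "xs \<in> L"
  obtains ys where "ys \<in> L" "prefix xs ys" "max_ext_rank L xs = lex_rank L ys"
proof -
  have "max_ext_rank L xs \<in> lex_rank L ` {ys \<in> L. prefix xs ys}"
    unfolding max_ext_rank_def using assms by (intro Max_in) auto
  then show ?thesis using that by blast
qed

lemma lex_rank_intervals_meet_iff:
  fixes L :: "'a::linorder list set"
  assumes L: "finite L" and xs: "xs \<in> L" and ys: "ys \<in> L"
  shows "max (lex_rank L xs) (lex_rank L ys) \<le> min (max_ext_rank L xs) (max_ext_rank L ys)
    \<longleftrightarrow> prefix xs ys \<or> prefix ys xs"
    (is "?meet xs ys \<longleftrightarrow> _")
proof
  have nested: "?meet xs ys" if "xs \<in> L" "ys \<in> L" "prefix xs ys" for xs ys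
  proof -
    have "lex_rank L xs \<le> lex_rank L ys"
      using lex_rank_mono[OF L prefix_imp_less_eq_list] that(3) .
    moreover have "lex_rank L ys \<le> max_ext_rank L xs" "lex_rank L ys \<le> max_ext_rank L ys"
      using lex_rank_le_max_ext_rank[OF L] that by auto
    ultimately show ?thesis by simp
  qed
  show "?meet xs ys" if "prefix xs ys \<or> prefix ys xs"
    using that nested[OF xs ys] nested[OF ys xs] by (auto simp: max.commute min.commute)
  have disjoint: "\<not> ?meet xs ys" if "\<forall>zs ws. xs @ zs < ys @ ws" "xs \<in> L" "ys \<in> L" for xs ys
  proof -
    obtain zs where zs: "zs \<in> L" "prefix xs zs" "max_ext_rank L xs = lex_rank L zs"
      using max_ext_rank_attained[OF L \<open>xs \<in> L\<close>] .
    from \<open>prefix xs zs\<close> obtain ws where "zs = xs @ ws" by (rule prefixE)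
    then have "zs < ys" using that(1) by (metis append_Nil2)
    then have "max_ext_rank L xs < lex_rank L ys" using lex_rank_strict_mono[OF L zs(1)] zs(3) by simp
    then show ?thesis by simp
  qed
  show "prefix xs ys \<or> prefix ys xs" if "?meet xs ys"
  proof (rule ccontr)
    assume "\<not> (prefix xs ys \<or> prefix ys xs)"
    then have "xs \<parallel> ys" by blast
    then show False
      using that parallel_extensions_less disjoint[OF _ xs ys] disjoint[OF _ ys xs]
      by (auto simp: max.commute min.commute)
  qed
qed

section \<open>Rooted trees\<close>

lemma simple_path_altdef:
  "simple_path I T p x y \<longleftrightarrow>
    p \<noteq> [] \<and> hd p = x \<and> last p = y \<and> distinct p \<and> set p \<subseteq> I \<and> successively T p"
  by (simp add: simple_path_def successively_conv_nth)

lemma simple_path_take: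
  assumes "simple_path I T p x y" "i < length p"
  shows "simple_path I T (take (Suc i) p) x (p ! i)"
proof -
  have "successively T (take (Suc i) p @ drop (Suc i) p)"
    using assms(1) by (simp add: simple_path_altdef)
  then have "successively T (take (Suc i) p)"
    by (simp only: successively_append_iff)
  moreover have "last (take (Suc i) p) = p ! i"
    using assms(2) by (simp add: take_Suc_conv_app_nth)
  ultimately show ?thesis
    using assms set_take_subset[of "Suc i" p] by (auto simp: simple_path_altdef)
qed

lemma simple_path_snoc:
  assumes "simple_path I T p x y" "z \<in> I" "z \<notin> set p" "T y z"
  shows "simple_path I T (p @ [z]) x z"
  using assms by (auto simp: simple_path_altdef successively_append_iff)

locale rooted_tree =
  fixes I :: "'i set" and T :: "'i \<Rightarrow> 'i \<Rightarrow> bool" and root :: 'i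
  assumes is_tree: "is_tree I T" and root_in: "root \<in> I"
begin

lemma finite_nodes: "finite I"
  using is_tree by (simp add: is_tree_def)

lemma edge_nodes: "T s t \<Longrightarrow> s \<in> I \<and> t \<in> I \<and> s \<noteq> t \<and> T t s"
  using is_tree by (simp add: is_tree_def)

lemma unique_simple_path: "s \<in> I \<Longrightarrow> t \<in> I \<Longrightarrow> \<exists>!p. simple_path I T p s t"
  using is_tree by (simp add: is_tree_def)

definition root_path :: "'i \<Rightarrow> 'i list" where
  "root_path t = (THE p. simple_path I T p root t)"

lemma simple_path_root_path: "t \<in> I \<Longrightarrow> simple_path I T (root_path t) root t"
  unfolding root_path_def by (rule theI' [OF unique_simple_path [OF root_in]])

lemma root_path_eqI: "t \<in> I \<Longrightarrow> simple_path I T p root t \<Longrightarrow> root_path t = p"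
  unfolding root_path_def by (rule the1_equality [OF unique_simple_path [OF root_in]])

lemma last_root_path: "t \<in> I \<Longrightarrow> last (root_path t) = t"
  using simple_path_root_path by (simp add: simple_path_altdef)

lemma set_root_path: "t \<in> I \<Longrightarrow> set (root_path t) \<subseteq> I"
  using simple_path_root_path by (simp add: simple_path_altdef)

lemma inj_on_root_path: "inj_on root_path I"
  by (metis inj_onI last_root_path)

lemma prefix_root_path_of_mem:
  assumes "t \<in> I" "s \<in> set (root_path t)"
  shows "prefix (root_path s) (root_path t)"
proof -
  obtain i where i: "i < length (root_path t)" "root_path t ! i = s"
    using assms(2) by (auto simp: in_set_conv_nth)
  have "s \<in> I" using assms set_root_path by blast
  moreover have "simple_path I T (take (Suc i) (root_path t)) root s"
    using simple_path_take [OF simple_path_root_path [OF assms(1)] i(1)] i(2) by simp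
  ultimately show ?thesis using root_path_eqI take_is_prefix by metis
qed

definition ancestor :: "'i \<Rightarrow> 'i \<Rightarrow> bool" where
  "ancestor s t \<longleftrightarrow> s \<in> I \<and> t \<in> I \<and> prefix (root_path s) (root_path t)"

definition depth :: "'i \<Rightarrow> nat" where
  "depth t = length (root_path t)"

lemma ancestor_refl: "t \<in> I \<Longrightarrow> ancestor t t"
  by (simp add: ancestor_def)

lemma ancestor_trans: "ancestor r s \<Longrightarrow> ancestor s t \<Longrightarrow> ancestor r t"
  unfolding ancestor_def by (meson prefix_order.trans)

lemma ancestor_antisym: "ancestor s t \<Longrightarrow> ancestor t s \<Longrightarrow> s = t"
  unfolding ancestor_def by (meson inj_on_root_path inj_onD prefix_order.antisym)

lemma ancestor_linear: "ancestor r t \<Longrightarrow> ancestor s t \<Longrightarrow> ancestor r s \<or> ancestor s r"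
  unfolding ancestor_def using prefix_same_cases by blast

lemma depth_mono: "ancestor s t \<Longrightarrow> depth s \<le> depth t"
  unfolding ancestor_def depth_def by (simp add: prefix_length_le)

lemma depth_strict_mono: "ancestor s t \<Longrightarrow> s \<noteq> t \<Longrightarrow> depth s < depth t"
  unfolding ancestor_def depth_def
  by (metis inj_on_root_path inj_onD prefix_length_less prefix_order.dual_order.not_eq_order_implies_strict)

lemma ancestor_eq_if_depth_le: "ancestor s t \<Longrightarrow> depth t \<le> depth s \<Longrightarrow> s = t"
  using depth_strict_mono by fastforce

lemma depth_le_card: "t \<in> I \<Longrightarrow> depth t \<le> card I"
  unfolding depth_def
  by (metis card_mono distinct_card finite_nodes set_root_path simple_path_altdef simple_path_root_path)

definition child :: "'i \<Rightarrow> 'i \<Rightarrow> bool" where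
  "child s t \<longleftrightarrow> s \<in> I \<and> t \<in> I \<and> root_path t = root_path s @ [t]"

lemma ancestor_if_child: "child s t \<Longrightarrow> ancestor s t"
  by (simp add: child_def ancestor_def)

lemma ancestor_of_child: "child s t \<Longrightarrow> ancestor r t \<Longrightarrow> r = t \<or> ancestor r s"
  unfolding child_def ancestor_def by (metis inj_on_root_path inj_onD prefix_snoc)

lemma child_if_edge:
  assumes "T s t"
  shows "child s t \<or> child t s"
proof -
  have extend: "child a b" if "T a b" "b \<notin> set (root_path a)" for a b
    using that edge_nodes[OF that(1)]
      simple_path_snoc [OF simple_path_root_path _ that(2)] last_root_path
    by (simp add: child_def root_path_eqI)
  have "s \<notin> set (root_path t) \<or> t \<notin> set (root_path s)"
    using edge_nodes[OF assms] prefix_root_path_of_mem inj_on_root_path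
    by (metis inj_onD prefix_order.antisym)
  then show ?thesis
    using extend assms edge_nodes[OF assms] by blast
qed

lemma walk_enters_subtree:
  assumes "p \<noteq> []" "successively T p" "ancestor s (last p)" "\<not> ancestor s (hd p)"
  shows "s \<in> set p"
  using assms
proof (induction p rule: list_nonempty_induct)
  case (single x)
  then show ?case by simp
next
  case (cons x xs)
  then have edge: "T x (hd xs)" and walk: "successively T xs"
    by (simp_all add: successively_Cons)
  show ?case
  proof (cases "ancestor s (hd xs)")
    case True
    from child_if_edge [OF edge] have "s = hd xs"
    proof (elim disjE)
      assume "child x (hd xs)"
      then show ?thesis using True cons.prems(3) ancestor_of_child by auto
    next
      assume "child (hd xs) x"
      then have "ancestor (hd xs) x" by (rule ancestor_if_child)
      then show ?thesis using True cons.prems(3) ancestor_trans by auto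
    qed
    then show ?thesis using \<open>xs \<noteq> []\<close> by simp
  next
    case False
    then have "s \<in> set xs"
      using cons.IH walk cons.prems(2) \<open>xs \<noteq> []\<close> by simp
    then show ?thesis by simp
  qed
qed

lemma walk_has_top:
  assumes "p \<noteq> []" "successively T p" "set p \<subseteq> I"
  shows "\<exists>m\<in>set p. \<forall>x\<in>set p. ancestor m x"
  using assms
proof (induction p rule: list_nonempty_induct)
  case (single x)
  then show ?case by (simp add: ancestor_refl)
next
  case (cons x xs)
  then have edge: "T x (hd xs)" and "successively T xs"
    by (simp_all add: successively_Cons)
  with cons obtain m where m: "m \<in> set xs" "\<forall>z\<in>set xs. ancestor m z"
    by auto
  have "ancestor m x \<or> (\<forall>z\<in>set (x # xs). ancestor x z)"
  proof (cases "m = hd xs")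
    case True
    from child_if_edge [OF edge] show ?thesis
    proof (elim disjE)
      assume "child x (hd xs)"
      then have "ancestor x m" using True by (simp add: ancestor_if_child)
      then show ?thesis using m cons.prems(2) ancestor_trans ancestor_refl by auto
    next
      assume "child (hd xs) x"
      then show ?thesis using True by (simp add: ancestor_if_child)
    qed
  next
    case False
    have "ancestor m (hd xs)" using m \<open>xs \<noteq> []\<close> by simp
    with child_if_edge [OF edge] show ?thesis
      using False ancestor_of_child ancestor_if_child ancestor_trans by blast
  qed
  then show ?case using m by auto
qed

end

section \<open>Highest bags and colourings of a tree decomposition\<close>

lemma ex_less_not_mem:
  fixes A :: "nat set"
  assumes "finite A" "card A < n"
  shows "\<exists>k<n. k \<notin> A"
proof (rule ccontr)
  assume "\<not> (\<exists>k<n. k \<notin> A)"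
  then have "{..<n} \<subseteq> A" by auto
  then have "card {..<n} \<le> card A" by (rule card_mono [OF assms(1)])
  then show False using assms(2) by simp
qed

definition max_bag_card :: "'i set \<Rightarrow> ('i \<Rightarrow> 'a set) \<Rightarrow> nat" where
  "max_bag_card I X = Max ((\<lambda>t. card (X t)) ` I)"

locale rooted_tree_decomposition =
  fixes V :: "'a set" and E :: "'a \<Rightarrow> 'a \<Rightarrow> bool"
    and I :: "'i set" and T :: "'i \<Rightarrow> 'i \<Rightarrow> bool" and X :: "'i \<Rightarrow> 'a set" and root :: 'i
  assumes simple_graph: "simple_graph V E"
    and tree_decomp: "tree_decomp V E I T X"
    and root_node: "root \<in> I"
begin

sublocale rooted_tree I T root
  using tree_decomp root_node by unfold_locales (simp_all add: tree_decomp_def)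

lemma finite_vertices: "finite V"
  using simple_graph by (simp add: simple_graph_def)

lemma edge_vertices: "E u v \<Longrightarrow> u \<in> V \<and> v \<in> V \<and> u \<noteq> v \<and> E v u"
  using simple_graph by (simp add: simple_graph_def)

lemma bag_subset: "t \<in> I \<Longrightarrow> X t \<subseteq> V"
  using tree_decomp by (simp add: tree_decomp_def)

lemma finite_bag: "t \<in> I \<Longrightarrow> finite (X t)"
  using bag_subset finite_vertices finite_subset by blast

lemma vertex_in_some_bag: "v \<in> V \<Longrightarrow> \<exists>t\<in>I. v \<in> X t"
  using tree_decomp by (auto simp: tree_decomp_def)

lemma edge_in_some_bag: "E u v \<Longrightarrow> \<exists>t\<in>I. u \<in> X t \<and> v \<in> X t"
  using tree_decomp by (simp add: tree_decomp_def)

lemma mem_bags_on_simple_path: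
  assumes "simple_path I T p s t" "v \<in> X s" "v \<in> X t" "r \<in> set p"
  shows "v \<in> X r"
proof -
  have "s \<in> I" "t \<in> I"
    using assms(1) hd_in_set last_in_set by (fastforce simp: simple_path_altdef)+
  then show ?thesis using tree_decomp assms unfolding tree_decomp_def by blast
qed

lemma card_bag_le: "t \<in> I \<Longrightarrow> card (X t) \<le> max_bag_card I X"
  unfolding max_bag_card_def using finite_nodes by simp

definition highest_bag :: "'a \<Rightarrow> 'i" where
  "highest_bag v = arg_min_on depth {t \<in> I. v \<in> X t}"

lemma highest_bag_mem: "v \<in> V \<Longrightarrow> highest_bag v \<in> I \<and> v \<in> X (highest_bag v)"
  unfolding highest_bag_def using arg_min_if_finite(1) [of "{t \<in> I. v \<in> X t}" depth]
    vertex_in_some_bag finite_nodes by auto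

lemma depth_highest_bag_le: "t \<in> I \<Longrightarrow> v \<in> X t \<Longrightarrow> depth (highest_bag v) \<le> depth t"
  unfolding highest_bag_def using arg_min_least [of "{t \<in> I. v \<in> X t}" t depth]
    finite_nodes by auto

lemma highest_bag_ancestor:
  assumes "t \<in> I" "v \<in> X t"
  shows "ancestor (highest_bag v) t"
proof -
  have "v \<in> V" using assms bag_subset by blast
  then have h: "highest_bag v \<in> I" "v \<in> X (highest_bag v)" using highest_bag_mem by auto
  obtain p where p: "simple_path I T p (highest_bag v) t"
    using unique_simple_path [OF h(1) assms(1)] by blast
  then obtain m where m: "m \<in> set p" "\<forall>x\<in>set p. ancestor m x"
    using walk_has_top p unfolding simple_path_altdef by blast
  have "depth (highest_bag v) \<le> depth m"
    using m(1) p mem_bags_on_simple_path [OF p h(2) assms(2)] depth_highest_bag_le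
    by (auto simp: simple_path_altdef)
  moreover have "ancestor m (highest_bag v)" "ancestor m t"
    using m(2) p hd_in_set last_in_set unfolding simple_path_altdef by metis+
  ultimately show ?thesis using ancestor_eq_if_depth_le by blast
qed

lemma mem_bag_between:
  assumes "t \<in> I" "v \<in> X t" "ancestor (highest_bag v) s" "ancestor s t"
  shows "v \<in> X s"
proof (cases "s = highest_bag v")
  case True
  then show ?thesis using assms(1,2) bag_subset highest_bag_mem by blast
next
  case False
  have "v \<in> V" using assms bag_subset by blast
  then have h: "highest_bag v \<in> I" "v \<in> X (highest_bag v)" using highest_bag_mem by auto
  obtain p where p: "simple_path I T p (highest_bag v) t"
    using unique_simple_path [OF h(1) assms(1)] by blast
  have "\<not> ancestor s (highest_bag v)" using False assms(3) ancestor_antisym by blast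
  then have "s \<in> set p"
    using p assms(4) walk_enters_subtree by (auto simp: simple_path_altdef)
  then show ?thesis using mem_bags_on_simple_path [OF p h(2) assms(2)] by blast
qed

lemma highest_bags_comparable:
  "t \<in> I \<Longrightarrow> u \<in> X t \<Longrightarrow> v \<in> X t \<Longrightarrow>
    ancestor (highest_bag u) (highest_bag v) \<or> ancestor (highest_bag v) (highest_bag u)"
  using ancestor_linear highest_bag_ancestor by blast

lemma mem_highest_bag_if_depth_le:
  assumes "t \<in> I" "u \<in> X t" "v \<in> X t" "depth (highest_bag u) \<le> depth (highest_bag v)"
  shows "u \<in> X (highest_bag v)"
  using highest_bags_comparable [OF assms(1-3)]
proof
  assume "ancestor (highest_bag u) (highest_bag v)"
  then show ?thesis using mem_bag_between assms highest_bag_ancestor by blast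
next
  assume "ancestor (highest_bag v) (highest_bag u)"
  then have "highest_bag v = highest_bag u" using assms(4) ancestor_eq_if_depth_le by blast
  then show ?thesis using assms(1,2) bag_subset highest_bag_mem by fastforce
qed

lemma bag_colouring_extend:
  assumes x: "x \<in> V" "x \<notin> S" and deeper: "\<And>u. u \<in> S \<Longrightarrow> depth (highest_bag u) \<le> depth (highest_bag x)"
    and inj: "\<And>t. t \<in> I \<Longrightarrow> inj_on c (X t \<inter> S)"
  obtains col where "col < max_bag_card I X" "\<And>t. t \<in> I \<Longrightarrow> inj_on (c(x := col)) (X t \<inter> insert x S)"
proof -
  let ?B = "X (highest_bag x) - {x}"
  have hx: "highest_bag x \<in> I" "x \<in> X (highest_bag x)" using highest_bag_mem x(1) by auto
  have "card (c ` ?B) \<le> card ?B" by (rule card_image_le) (simp add: finite_bag hx(1))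
  also have "\<dots> < card (X (highest_bag x))"
    using finite_bag [OF hx(1)] hx(2) by (rule card_Diff1_less)
  also have "\<dots> \<le> max_bag_card I X" using hx(1) by (rule card_bag_le)
  finally obtain col where col: "col < max_bag_card I X" "col \<notin> c ` ?B"
    using ex_less_not_mem finite_bag hx(1) by (metis finite_Diff finite_imageI)
  have "inj_on (c(x := col)) (X t \<inter> insert x S)" if "t \<in> I" for t
  proof -
    have "inj_on (c(x := col)) (X t \<inter> S)"
      using inj [OF that] x(2) by (simp add: inj_on_def)
    moreover have "col \<notin> c ` (X t \<inter> S)" if "x \<in> X t"
    proof -
      have "X t \<inter> S \<subseteq> ?B"
        using mem_highest_bag_if_depth_le [OF \<open>t \<in> I\<close> _ that] deeper x(2) by auto
      then show ?thesis using col(2) by auto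
    qed
    ultimately show ?thesis
      using x(2) by (cases "x \<in> X t") (auto simp: Int_insert_right)
  qed
  then show ?thesis using col(1) that by blast
qed

lemma bag_colouring_of_subset:
  assumes "finite S" "S \<subseteq> V"
  shows "\<exists>c::'a \<Rightarrow> nat. (\<forall>v\<in>S. c v < max_bag_card I X) \<and> (\<forall>t\<in>I. inj_on c (X t \<inter> S))"
  using assms
proof (induction S rule: finite_ranking_induct [where f = "\<lambda>v. depth (highest_bag v)"])
  case empty
  show ?case by simp
next
  case (insert x S)
  then obtain c :: "'a \<Rightarrow> nat"
    where c: "\<forall>v\<in>S. c v < max_bag_card I X" "\<forall>t\<in>I. inj_on c (X t \<inter> S)" by auto
  show ?case
  proof (cases "x \<in> S")
    case True
    then show ?thesis using c by (metis insert_absorb)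
  next
    case False
    obtain col where col: "col < max_bag_card I X"
      and "\<And>t. t \<in> I \<Longrightarrow> inj_on (c(x := col)) (X t \<inter> insert x S)"
      using bag_colouring_extend [of x S c] insert False c(2) by blast
    moreover have "\<forall>v\<in>insert x S. (c(x := col)) v < max_bag_card I X" using c(1) col by simp
    ultimately show ?thesis by blast
  qed
qed

lemma bag_colouring_exists:
  obtains c :: "'a \<Rightarrow> nat"
  where "\<And>v. v \<in> V \<Longrightarrow> c v < max_bag_card I X" "\<And>t. t \<in> I \<Longrightarrow> inj_on c (X t)"
proof -
  obtain c :: "'a \<Rightarrow> nat"
    where c: "\<forall>v\<in>V. c v < max_bag_card I X" "\<forall>t\<in>I. inj_on c (X t \<inter> V)"
    using bag_colouring_of_subset [OF finite_vertices] by blast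
  show ?thesis
  proof (rule that)
    show "c v < max_bag_card I X" if "v \<in> V" for v using c(1) that by blast
    show "inj_on c (X t)" if "t \<in> I" for t
      using c(2) that bag_subset [OF that] by (metis Int_absorb2)
  qed
qed

end

section \<open>The box representation\<close>

lemma box_rep_of_nat_intervals:
  fixes lo hi :: "'a \<Rightarrow> nat \<Rightarrow> nat"
  assumes "\<And>v i. v \<in> V \<Longrightarrow> i < b \<Longrightarrow> lo v i \<le> hi v i"
    and "\<And>u v. u \<in> V \<Longrightarrow> v \<in> V \<Longrightarrow> u \<noteq> v \<Longrightarrow>
      E u v \<longleftrightarrow> (\<forall>i<b. max (lo u i) (lo v i) \<le> min (hi u i) (hi v i))"
  shows "box_rep V E b"
  unfolding box_rep_def
  by (rule exI [of _ "\<lambda>v i. real (lo v i)"], rule exI [of _ "\<lambda>v i. real (hi v i)"])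
    (simp add: assms flip: of_nat_max of_nat_min)

locale coloured_tree_decomposition =
  rooted_tree_decomposition V E I T X root
  for V :: "'a set" and E and I :: "'i::linorder set" and T and X and root +
  fixes c :: "'a \<Rightarrow> nat" and k :: nat
  assumes colour_less: "v \<in> V \<Longrightarrow> c v < k"
    and colour_inj: "t \<in> I \<Longrightarrow> inj_on c (X t)"
begin

definition neighbour_depth :: "nat \<Rightarrow> 'a \<Rightarrow> nat" where
  "neighbour_depth j v = Min (insert (Suc (depth (highest_bag v)))
     ((\<lambda>w. depth (highest_bag w)) ` {w \<in> X (highest_bag v). c w = j \<and> E v w}))"

definition lo :: "'a \<Rightarrow> nat \<Rightarrow> nat" where
  "lo v i = (case i of
      0 \<Rightarrow> lex_rank (root_path ` I) (root_path (highest_bag v))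
    | Suc j \<Rightarrow> if c v = j then depth (highest_bag v) else neighbour_depth j v)"

(* Suc (card I) exceeds every depth and stands for the infinite end of a ray. *)
definition hi :: "'a \<Rightarrow> nat \<Rightarrow> nat" where
  "hi v i = (case i of
      0 \<Rightarrow> max_ext_rank (root_path ` I) (root_path (highest_bag v))
    | Suc j \<Rightarrow> if c v = j then depth (highest_bag v) else Suc (card I))"

abbreviation boxes_meet :: "'a \<Rightarrow> 'a \<Rightarrow> nat \<Rightarrow> bool" where
  "boxes_meet u v i \<equiv> max (lo u i) (lo v i) \<le> min (hi u i) (hi v i)"

lemma finite_neighbour_depths:
  "v \<in> V \<Longrightarrow> finite (insert (Suc (depth (highest_bag v)))
     ((\<lambda>w. depth (highest_bag w)) ` {w \<in> X (highest_bag v). c w = j \<and> E v w}))"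
  using finite_bag highest_bag_mem by simp

lemma neighbour_depth_le: "v \<in> V \<Longrightarrow> neighbour_depth j v \<le> Suc (depth (highest_bag v))"
  unfolding neighbour_depth_def using finite_neighbour_depths by simp

lemma neighbour_depth_le_neighbour:
  "v \<in> V \<Longrightarrow> w \<in> X (highest_bag v) \<Longrightarrow> E v w \<Longrightarrow> neighbour_depth (c w) v \<le> depth (highest_bag w)"
  unfolding neighbour_depth_def using finite_neighbour_depths by (intro Min_le) auto

lemma less_neighbour_depth:
  assumes "v \<in> V" "d \<le> depth (highest_bag v)"
    and "\<And>w. w \<in> X (highest_bag v) \<Longrightarrow> c w = j \<Longrightarrow> E v w \<Longrightarrow> d < depth (highest_bag w)"
  shows "d < neighbour_depth j v"
  unfolding neighbour_depth_def using assms finite_neighbour_depths [OF assms(1)]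
  by (subst Min_gr_iff) auto

lemma lo_le_hi:
  assumes "v \<in> V"
  shows "lo v i \<le> hi v i"
proof (cases i)
  case 0
  have "root_path (highest_bag v) \<in> root_path ` I" using highest_bag_mem [OF assms] by simp
  then show ?thesis
    using 0 lex_rank_le_max_ext_rank [of "root_path ` I"] finite_nodes
    by (simp add: lo_def hi_def)
next
  case (Suc j)
  then show ?thesis
    using neighbour_depth_le [OF assms, of j] depth_le_card highest_bag_mem [OF assms]
    by (fastforce simp: lo_def hi_def)
qed

lemma boxes_meet_0_iff:
  "u \<in> V \<Longrightarrow> v \<in> V \<Longrightarrow> boxes_meet u v 0 \<longleftrightarrow>
    ancestor (highest_bag u) (highest_bag v) \<or> ancestor (highest_bag v) (highest_bag u)"
  using lex_rank_intervals_meet_iff [of "root_path ` I"] finite_nodes highest_bag_mem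
  by (simp add: lo_def hi_def ancestor_def)

lemma neighbour_depth_le_depth_of_neighbour:
  assumes "E v w"
  shows "neighbour_depth (c w) v \<le> depth (highest_bag w)"
proof -
  have v: "v \<in> V" and w: "w \<in> V" using edge_vertices [OF assms] by auto
  obtain t where t: "t \<in> I" "v \<in> X t" "w \<in> X t" using edge_in_some_bag [OF assms] by blast
  show ?thesis
  proof (cases "ancestor (highest_bag w) (highest_bag v)")
    case True
    then have "w \<in> X (highest_bag v)"
      using mem_bag_between [OF t(1,3)] highest_bag_ancestor [OF t(1,2)] by blast
    then show ?thesis using neighbour_depth_le_neighbour [OF v _ assms] by blast
  next
    case False
    then have "depth (highest_bag v) < depth (highest_bag w)"
      using highest_bags_comparable [OF t] depth_strict_mono ancestor_refl by metis
    then show ?thesis using neighbour_depth_le [OF v, of "c w"] by simp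
  qed
qed

lemma boxes_meet_commute: "boxes_meet u v i \<longleftrightarrow> boxes_meet v u i"
  by (simp add: max.commute min.commute)

lemma adjacent_boxes_meet:
  assumes "E u v"
  shows "boxes_meet u v i"
proof -
  have u: "u \<in> V" and v: "v \<in> V" and "u \<noteq> v" using edge_vertices [OF assms] by auto
  obtain t where t: "t \<in> I" "u \<in> X t" "v \<in> X t" using edge_in_some_bag [OF assms] by blast
  show ?thesis
  proof (cases i)
    case 0
    then show ?thesis using boxes_meet_0_iff [OF u v] highest_bags_comparable [OF t] by simp
  next
    case (Suc j)
    have "c u \<noteq> c v"
      using inj_onD [OF colour_inj [OF t(1)] _ t(2,3)] \<open>u \<noteq> v\<close> by blast
    have coloured_end: "boxes_meet x y (Suc j)"
      if "E x y" "c x = j" "c y \<noteq> j" for x y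
    proof -
      have "x \<in> V" using edge_vertices [OF that(1)] by blast
      then have "depth (highest_bag x) \<le> card I"
        using depth_le_card highest_bag_mem by blast
      then show ?thesis
        using that neighbour_depth_le_depth_of_neighbour [of y x] edge_vertices [OF that(1)]
        by (simp add: lo_def hi_def)
    qed
    consider "c u = j" | "c v = j" | "c u \<noteq> j" "c v \<noteq> j" by blast
    then show ?thesis
    proof cases
      case 1
      then show ?thesis using coloured_end [OF assms] \<open>c u \<noteq> c v\<close> Suc by simp
    next
      case 2
      then show ?thesis
        using coloured_end [of v u] edge_vertices [OF assms] \<open>c u \<noteq> c v\<close> Suc boxes_meet_commute
        by simp
    next
      case 3
      have "neighbour_depth j w \<le> Suc (card I)" if "w \<in> V" for w
        using neighbour_depth_le [OF that, of j] depth_le_card highest_bag_mem [OF that] by fastforce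
      then show ?thesis using 3 Suc u v by (simp add: lo_def hi_def)
    qed
  qed
qed

lemma nonadjacent_boxes_separated:
  assumes u: "u \<in> V" and v: "v \<in> V" and "u \<noteq> v" "\<not> E v u"
    and anc: "ancestor (highest_bag u) (highest_bag v)"
  shows "\<not> boxes_meet u v (Suc (c u))"
proof -
  have u_bag: "highest_bag u \<in> I" "u \<in> X (highest_bag u)" using highest_bag_mem [OF u] by auto
  have v_bag: "highest_bag v \<in> I" "v \<in> X (highest_bag v)" using highest_bag_mem [OF v] by auto
  have no_twin: "w = u" if "w \<in> X (highest_bag u)" "c w = c u" for w
    using colour_inj [OF u_bag(1)] that u_bag(2) by (meson inj_onD)
  show ?thesis
  proof (cases "c v = c u")
    case True
    have "depth (highest_bag u) \<noteq> depth (highest_bag v)"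
      using no_twin [of v] True \<open>u \<noteq> v\<close> v_bag(2) anc ancestor_eq_if_depth_le by fastforce
    then show ?thesis using True by (auto simp: lo_def hi_def)
  next
    case False
    have "depth (highest_bag u) < neighbour_depth (c u) v"
    proof (rule less_neighbour_depth [OF v depth_mono [OF anc]])
      fix w assume w: "w \<in> X (highest_bag v)" "c w = c u" "E v w"
      have "\<not> ancestor (highest_bag w) (highest_bag u)"
        using mem_bag_between [OF v_bag(1) w(1) _ anc] no_twin w \<open>\<not> E v u\<close> by blast
      moreover have "ancestor (highest_bag w) (highest_bag v)"
        using highest_bag_ancestor [OF v_bag(1) w(1)] .
      ultimately show "depth (highest_bag u) < depth (highest_bag w)"
        using anc ancestor_linear depth_strict_mono ancestor_refl by metis
    qed
    then show ?thesis using False by (auto simp: lo_def hi_def)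
  qed
qed

lemma box_rep_colours: "box_rep V E (Suc k)"
proof (rule box_rep_of_nat_intervals)
  show "lo v i \<le> hi v i" if "v \<in> V" for v i using lo_le_hi [OF that] .
  fix u v assume u: "u \<in> V" and v: "v \<in> V" and "u \<noteq> v"
  show "E u v \<longleftrightarrow> (\<forall>i<Suc k. boxes_meet u v i)"
  proof
    assume meet: "\<forall>i<Suc k. boxes_meet u v i"
    show "E u v"
    proof (rule ccontr)
      assume "\<not> E u v"
      then have "\<not> E v u" using edge_vertices by blast
      have "ancestor (highest_bag u) (highest_bag v) \<or> ancestor (highest_bag v) (highest_bag u)"
        using meet boxes_meet_0_iff [OF u v] by blast
      then show False
      proof
        assume "ancestor (highest_bag u) (highest_bag v)"
        then show False
          using nonadjacent_boxes_separated [OF u v \<open>u \<noteq> v\<close> \<open>\<not> E v u\<close>] meet colour_less [OF u]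
          by simp
      next
        assume "ancestor (highest_bag v) (highest_bag u)"
        then show False
          using nonadjacent_boxes_separated [OF v u _ \<open>\<not> E u v\<close>] \<open>u \<noteq> v\<close> meet colour_less [OF v]
            boxes_meet_commute
          by auto
      qed
    qed
  next
    assume "E u v"
    then show "\<forall>i<Suc k. boxes_meet u v i" using adjacent_boxes_meet by blast
  qed
qed

end

lemma box_rep_of_tree_decomp:
  fixes I :: "'i::linorder set"
  assumes "simple_graph V E" "tree_decomp V E I T X"
  shows "box_rep V E (Suc (max_bag_card I X))"
proof -
  obtain root where "root \<in> I" using assms(2) by (auto simp: tree_decomp_def is_tree_def)
  then interpret rooted_tree_decomposition V E I T X root
    using assms by unfold_locales
  obtain c where "\<And>v. v \<in> V \<Longrightarrow> c v < max_bag_card I X" "\<And>t. t \<in> I \<Longrightarrow> inj_on c (X t)"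
    using bag_colouring_exists by blast
  then interpret coloured_tree_decomposition V E I T X root c "max_bag_card I X"
    by unfold_locales
  show ?thesis by (rule box_rep_colours)
qed

section \<open>Treewidth\<close>

lemma simple_path_singleton_iff: "simple_path {x} T p x x \<longleftrightarrow> p = [x]"
proof
  assume "simple_path {x} T p x x"
  then have "p \<noteq> []" "distinct p" "set p = {x}"
    by (auto simp: simple_path_altdef)
  then show "p = [x]"
    by (cases p) (auto simp: subset_singleton_iff)
qed (simp add: simple_path_altdef)

lemma tree_decomp_single_bag:
  assumes "simple_graph V E"
  shows "tree_decomp V E {0::nat} (\<lambda>_ _. False) (\<lambda>_. V)"
  using assms
  by (auto simp: tree_decomp_def is_tree_def simple_path_singleton_iff simple_graph_def)

lemma treewidth_attained:
  assumes "simple_graph V E"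
  obtains I :: "nat set" and T X where "tree_decomp V E I T X" "decomp_width I X = treewidth V E"
proof -
  \<comment> \<open>\<open>LEAST\<close> over \<open>int\<close> needs an explicit minimum; widths are at least \<open>-1\<close>, so minimise \<open>nat (w + 1)\<close>\<close>
  let ?Q = "\<lambda>w. \<exists>(I::nat set) T X. tree_decomp V E I T X \<and> decomp_width I X = w"
  have "?Q (int (card V) - 1)"
    using tree_decomp_single_bag [OF assms] by (force simp: decomp_width_def)
  then obtain w where w: "?Q w" and least: "\<And>w'. ?Q w' \<Longrightarrow> nat (w + 1) \<le> nat (w' + 1)"
    using ex_has_least_nat [of ?Q _ "\<lambda>w. nat (w + 1)"] by blast
  have "- 1 \<le> w'" if "?Q w'" for w' using that by (auto simp: decomp_width_def)
  then have "treewidth V E = w"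
    unfolding treewidth_def using w least by (intro Least_equality) force+
  then show ?thesis using w that by blast
qed

theorem theorem2:
  fixes V :: "'a set" and E :: "'a \<Rightarrow> 'a \<Rightarrow> bool"
  assumes "simple_graph V E"
  shows "int (boxicity V E) \<le> treewidth V E + 2"
proof -
  obtain I :: "nat set" and T X
    where decomp: "tree_decomp V E I T X" and width: "decomp_width I X = treewidth V E"
    using treewidth_attained [OF assms] .
  have "boxicity V E \<le> Suc (max_bag_card I X)"
    unfolding boxicity_def by (rule Least_le) (rule box_rep_of_tree_decomp [OF assms decomp])
  then show ?thesis using width by (simp add: decomp_width_def max_bag_card_def)
qed

end
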